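(* For every integer $k \geq 1$ there is a graph $G$ of tree-width $k$ with $\operatorname{pn}_u(G) \geq \operatorname{pn}_\ell(G) \geq k$.
   Context: All graphs are finite and simple. A linear embedding of a graph $G=(V,E)$ is a pair $(\prec,\mathcal{P})$ where $\prec$ is a total ordering of $V$ and $\mathcal{P}$ is a partition of $E$ into parts called pages. Two edges $uv, xy$ with $u\prec v$, $x \prec y$ cross if $u \prec x \prec v \prec y$ or $x \prec u \prec y \prec v$. A book embedding is a linear embedding in which no two crossing edges lie on the same page. For a book embedding and a vertex $v$, let $\mathcal{P}_v$ be the set of pages containing at least one edge incident to $v$; the embedding is $k$-local if $|\mathcal{P}_v| \le k$ for all $v$, and the local page number $\operatorname{pn}_\ell(G)$ is the smallest $k$ such that $G$ admits a $k$-local book embedding (with any number of pages). For a linear embedding and a page $P$, let $G_P$ be the subgraph consisting of the edges of $P$ and all vertices incident to an edge of $P$. A union embedding is a linear embedding such that for every page $P$ and every connected component $C$ of $G_P$, no two edges of $C$ cross. The union page number $\operatorname{pn}_u(G)$ is the smallest number of pages of a union embedding of $G$. *)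

theory Defs
  imports Main
begin

definition simple_graph :: "'a set \<Rightarrow> 'a set set \<Rightarrow> bool" where
  "simple_graph V E \<longleftrightarrow> finite V \<and> (\<forall>e\<in>E. e \<subseteq> V \<and> card e = 2)"

definition reach :: "'a set \<Rightarrow> 'a set set \<Rightarrow> 'a \<Rightarrow> 'a \<Rightarrow> bool" where
  "reach V E u w \<longleftrightarrow> u \<in> V \<and> w \<in> V \<and>
     (\<lambda>x y. x \<in> V \<and> y \<in> V \<and> {x, y} \<in> E)\<^sup>*\<^sup>* u w"

definition connected_graph :: "'a set \<Rightarrow> 'a set set \<Rightarrow> bool" where
  "connected_graph V E \<longleftrightarrow> V \<noteq> {} \<and> (\<forall>u\<in>V. \<forall>w\<in>V. reach V E u w)"

definition has_cycle :: "'a set \<Rightarrow> 'a set set \<Rightarrow> bool" where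
  "has_cycle V E \<longleftrightarrow> (\<exists>cs. length cs \<ge> 3 \<and> distinct cs \<and> set cs \<subseteq> V \<and>
     (\<forall>i. Suc i < length cs \<longrightarrow> {cs ! i, cs ! Suc i} \<in> E) \<and>
     {last cs, hd cs} \<in> E)"

definition is_tree :: "'a set \<Rightarrow> 'a set set \<Rightarrow> bool" where
  "is_tree V E \<longleftrightarrow> simple_graph V E \<and> connected_graph V E \<and> \<not> has_cycle V E"

definition tree_decomposition ::
  "'a set \<Rightarrow> 'a set set \<Rightarrow> nat set \<Rightarrow> nat set set \<Rightarrow> (nat \<Rightarrow> 'a set) \<Rightarrow> bool" where
  "tree_decomposition V E N F B \<longleftrightarrow>
     is_tree N F \<and>
     (\<Union>t\<in>N. B t) = V \<and>
     (\<forall>e\<in>E. \<exists>t\<in>N. e \<subseteq> B t) \<and>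
     (\<forall>v\<in>V. connected_graph {t\<in>N. v \<in> B t} {f\<in>F. f \<subseteq> {t\<in>N. v \<in> B t}})"

definition treewidth :: "'a set \<Rightarrow> 'a set set \<Rightarrow> nat" where
  "treewidth V E = (LEAST w. \<exists>N F B. tree_decomposition V E N F B \<and>
                                     (\<forall>t\<in>N. card (B t) \<le> w + 1))"

text \<open>The vertex ordering is given by a list vs enumerating V without repetition:
  u precedes w iff u occurs before w in vs. The page partition is given by a
  page-assignment p of the edges; the pages are the nonempty fibres of p on E.\<close>
definition prec :: "'a list \<Rightarrow> 'a \<Rightarrow> 'a \<Rightarrow> bool" where
  "prec vs u w \<longleftrightarrow> (\<exists>i j. i < j \<and> j < length vs \<and> vs ! i = u \<and> vs ! j = w)"

definition linear_embedding :: "'a set \<Rightarrow> 'a set set \<Rightarrow> 'a list \<Rightarrow> ('a set \<Rightarrow> nat) \<Rightarrow> bool" where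
  "linear_embedding V E vs p \<longleftrightarrow> distinct vs \<and> set vs = V"

definition crosses :: "'a list \<Rightarrow> 'a set \<Rightarrow> 'a set \<Rightarrow> bool" where
  "crosses vs e f \<longleftrightarrow> (\<exists>u v x y. e = {u, v} \<and> f = {x, y} \<and>
       prec vs u v \<and> prec vs x y \<and>
       ((prec vs u x \<and> prec vs x v \<and> prec vs v y) \<or>
        (prec vs x u \<and> prec vs u y \<and> prec vs y v)))"

definition book_embedding :: "'a set \<Rightarrow> 'a set set \<Rightarrow> 'a list \<Rightarrow> ('a set \<Rightarrow> nat) \<Rightarrow> bool" where
  "book_embedding V E vs p \<longleftrightarrow> linear_embedding V E vs p \<and>
     (\<forall>e\<in>E. \<forall>f\<in>E. p e = p f \<longrightarrow> \<not> crosses vs e f)"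

definition pages_at :: "'a set set \<Rightarrow> ('a set \<Rightarrow> nat) \<Rightarrow> 'a \<Rightarrow> nat set" where
  "pages_at E p v = p ` {e\<in>E. v \<in> e}"

definition k_local :: "nat \<Rightarrow> 'a set \<Rightarrow> 'a set set \<Rightarrow> ('a set \<Rightarrow> nat) \<Rightarrow> bool" where
  "k_local k V E p \<longleftrightarrow> (\<forall>v\<in>V. card (pages_at E p v) \<le> k)"

definition local_page_number :: "'a set \<Rightarrow> 'a set set \<Rightarrow> nat" where
  "local_page_number V E = (LEAST k. \<exists>vs p. book_embedding V E vs p \<and> k_local k V E p)"

definition page_edges :: "'a set set \<Rightarrow> ('a set \<Rightarrow> nat) \<Rightarrow> nat \<Rightarrow> 'a set set" where
  "page_edges E p i = {e\<in>E. p e = i}"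

definition page_vertices :: "'a set set \<Rightarrow> ('a set \<Rightarrow> nat) \<Rightarrow> nat \<Rightarrow> 'a set" where
  "page_vertices E p i = \<Union>(page_edges E p i)"

definition same_component :: "'a set set \<Rightarrow> ('a set \<Rightarrow> nat) \<Rightarrow> nat \<Rightarrow> 'a set \<Rightarrow> 'a set \<Rightarrow> bool" where
  "same_component E p i e f \<longleftrightarrow> e \<in> page_edges E p i \<and> f \<in> page_edges E p i \<and>
     (\<exists>u\<in>e. \<exists>w\<in>f. reach (page_vertices E p i) (page_edges E p i) u w)"

definition union_embedding :: "'a set \<Rightarrow> 'a set set \<Rightarrow> 'a list \<Rightarrow> ('a set \<Rightarrow> nat) \<Rightarrow> bool" where
  "union_embedding V E vs p \<longleftrightarrow> linear_embedding V E vs p \<and>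
     (\<forall>i. \<forall>e f. same_component E p i e f \<longrightarrow> \<not> crosses vs e f)"

definition num_pages :: "'a set set \<Rightarrow> ('a set \<Rightarrow> nat) \<Rightarrow> nat" where
  "num_pages E p = card (p ` E)"

definition union_page_number :: "'a set \<Rightarrow> 'a set set \<Rightarrow> nat" where
  "union_page_number V E = (LEAST k. \<exists>vs p. union_embedding V E vs p \<and> num_pages E p = k)"

end

theory Submission
  imports Defs "HOL-Library.FuncSet"
begin

text \<open>The witness is the complete split graph: a clique on \<open>{0..<k}\<close> joined to an independent
  set of \<open>n = 3 k\<^sup>3\<close> vertices.  Bags \<open>{0..<k} \<union> {x}\<close> along a star decompose it with width \<open>k\<close>;
  conversely the \<open>(k+1)\<close>-clique formed by \<open>{0..<k}\<close> and one independent vertex lies in a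
  single bag, by the Helly property of subtrees.

  Giving every connected component of every page of a union embedding a page of its own turns
  a union embedding with \<open>m\<close> pages into an \<open>m\<close>-local book embedding, so \<open>pn\<^sub>\<ell> \<le> pn\<^sub>u\<close>.

  In a \<open>j\<close>-local book embedding with \<open>j < k\<close>, each independent vertex \<open>x\<close> has edges to two
  clique vertices \<open>a \<prec> b\<close> on a common page.  If \<open>x \<prec> y\<close> are independent vertices with
  the same \<open>a\<close>, \<open>b\<close> and the same position relative to \<open>a\<close> and \<open>b\<close>, then an edge of the
  path \<open>a x b\<close> crosses an edge of \<open>a y b\<close>, so \<open>a x\<close> and \<open>a y\<close> are on different pages.
  By pigeonhole some such class has \<open>k > j\<close> members, and \<open>a\<close> meets more than \<open>j\<close> pages.\<close>

section \<open>Vertex orders and crossings\<close>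

lemma prec_trans:
  assumes "distinct vs" "prec vs u v" "prec vs v w" shows "prec vs u w"
proof -
  from assms(2) obtain i j where ij: "i < j" "j < length vs" "vs ! i = u" "vs ! j = v"
    unfolding prec_def by blast
  from assms(3) obtain i' j' where ij': "i' < j'" "j' < length vs" "vs ! i' = v" "vs ! j' = w"
    unfolding prec_def by blast
  have "j = i'" using ij ij' assms(1) nth_eq_iff_index_eq by fastforce
  then show ?thesis unfolding prec_def using ij ij' by (metis order.strict_trans)
qed

lemma prec_irrefl: "distinct vs \<Longrightarrow> \<not> prec vs u u"
  unfolding prec_def by (metis nat_neq_iff nth_eq_iff_index_eq order.strict_trans)

lemma prec_asym: "distinct vs \<Longrightarrow> prec vs u w \<Longrightarrow> \<not> prec vs w u"
  using prec_trans prec_irrefl by metis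

lemma prec_total:
  assumes "u \<in> set vs" "w \<in> set vs" "u \<noteq> w" shows "prec vs u w \<or> prec vs w u"
proof -
  obtain i where i: "i < length vs" "vs ! i = u" using assms(1) by (meson in_set_conv_nth)
  obtain j where j: "j < length vs" "vs ! j = w" using assms(2) by (meson in_set_conv_nth)
  have "i \<noteq> j" using i j assms(3) by auto
  then show ?thesis unfolding prec_def using i j by (metis nat_neq_iff)
qed

lemma crossesI:
  assumes "distinct vs" "prec vs u x" "prec vs x v" "prec vs v y"
  shows "crosses vs {u, v} {x, y}"
proof -
  have "prec vs u v" "prec vs x y" using assms prec_trans by metis+
  then show ?thesis unfolding crosses_def using assms by blast
qed

lemma not_crosses_self:
  assumes "distinct vs" shows "\<not> crosses vs e e"
proof
  assume "crosses vs e e"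
  then obtain u v x y where "e = {u, v}" "e = {x, y}" "prec vs u v" "prec vs x y"
    "(prec vs u x \<and> prec vs x v \<and> prec vs v y) \<or> (prec vs x u \<and> prec vs u y \<and> prec vs y v)"
    unfolding crosses_def by blast
  then show False using assms prec_irrefl prec_asym by (metis doubleton_eq_iff)
qed

section \<open>Page components\<close>

lemma reach_refl: "x \<in> V \<Longrightarrow> reach V E x x"
  unfolding reach_def by auto

lemma reach_edge: "x \<in> V \<Longrightarrow> y \<in> V \<Longrightarrow> {x, y} \<in> E \<Longrightarrow> reach V E x y"
  unfolding reach_def by auto

lemma reach_trans: "reach V E u v \<Longrightarrow> reach V E v w \<Longrightarrow> reach V E u w"
  unfolding reach_def by (meson rtranclp_trans)

lemma reach_sym:
  assumes "reach V E u w" shows "reach V E w u"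
proof -
  let ?R = "\<lambda>x y. x \<in> V \<and> y \<in> V \<and> {x, y} \<in> E"
  have "symp ?R" by (auto intro: sympI simp: insert_commute)
  then have "?R\<^sup>*\<^sup>* w u" using assms unfolding reach_def by (meson symp_rtranclp sympD)
  then show ?thesis using assms unfolding reach_def by blast
qed

lemma edge_card_2:
  assumes "simple_graph V E" "{x, y} \<in> E" shows "x \<noteq> y" "x \<in> V" "y \<in> V"
  using assms unfolding simple_graph_def by (auto simp: card_insert_if split: if_splits)

lemma simple_graph_finite_edges: "simple_graph V E \<Longrightarrow> finite E"
  unfolding simple_graph_def by (meson Pow_iff finite_Pow_iff rev_finite_subset subsetI)

lemma same_componentD:
  "same_component E p i e f \<Longrightarrow> e \<in> E \<and> f \<in> E \<and> p e = i \<and> p f = i"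
  unfolding same_component_def page_edges_def by auto

lemma same_component_at_vertex:
  assumes "e \<in> E" "f \<in> E" "p e = p f" "v \<in> e" "v \<in> f"
  shows "same_component E p (p e) e f"
proof -
  have "v \<in> page_vertices E p (p e)"
    using assms unfolding page_vertices_def page_edges_def by auto
  then show ?thesis
    using assms reach_refl unfolding same_component_def page_edges_def by fastforce
qed

lemma same_component_sym:
  assumes "same_component E p i e f" shows "same_component E p i f e"
proof -
  obtain u w where "u \<in> e" "w \<in> f" "reach (page_vertices E p i) (page_edges E p i) u w"
    using assms unfolding same_component_def by blast
  then show ?thesis using assms reach_sym unfolding same_component_def by meson
qed

lemma same_component_trans:
  assumes sg: "simple_graph V E"
    and ef: "same_component E p i e f" and fg: "same_component E p i f g"
  shows "same_component E p i e g"
proof -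
  let ?V = "page_vertices E p i" and ?E = "page_edges E p i"
  obtain u w1 where 1: "u \<in> e" "w1 \<in> f" "reach ?V ?E u w1"
    using ef unfolding same_component_def by blast
  obtain w2 w where 2: "w2 \<in> f" "w \<in> g" "reach ?V ?E w2 w"
    using fg unfolding same_component_def by blast
  have fP: "f \<in> ?E" using ef unfolding same_component_def by blast
  then have fV: "f \<subseteq> ?V" unfolding page_vertices_def by auto
  obtain a b where "f = {a, b}"
    using sg same_componentD[OF ef] unfolding simple_graph_def by (meson card_2_iff)
  then have "reach ?V ?E w1 w2"
    using 1(2) 2(1) fP fV
    by (cases "w1 = w2") (auto intro: reach_refl reach_edge simp: insert_commute)
  then have "reach ?V ?E u w" using 1(3) 2(3) reach_trans by meson
  then show ?thesis using 1(1) 2(2) ef fg unfolding same_component_def by blast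
qed

lemma same_component_equiv:
  assumes sg: "simple_graph V E"
  shows "equiv E {(e, f). same_component E p (p e) e f}"
proof (rule equivI)
  show "{(e, f). same_component E p (p e) e f} \<subseteq> E \<times> E"
    by (auto dest: same_componentD)
  show "refl_on E {(e, f). same_component E p (p e) e f}"
  proof (rule refl_onI)
    fix e assume "e \<in> E"
    then obtain a b where "e = {a, b}"
      using sg unfolding simple_graph_def by (meson card_2_iff)
    then show "(e, e) \<in> {(e, f). same_component E p (p e) e f}"
      using same_component_at_vertex[OF \<open>e \<in> E\<close> \<open>e \<in> E\<close>] by blast
  qed
  show "sym {(e, f). same_component E p (p e) e f}"
    by (rule symI) (metis case_prodD case_prodI mem_Collect_eq same_componentD same_component_sym)
  show "trans {(e, f). same_component E p (p e) e f}"
    by (rule transI) (metis case_prodD case_prodI mem_Collect_eq same_componentD same_component_trans[OF sg])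
qed

lemma equiv_class_index:
  assumes "finite A" "equiv A r"
  obtains q :: "'a \<Rightarrow> nat" where "\<And>x y. x \<in> A \<Longrightarrow> y \<in> A \<Longrightarrow> q x = q y \<longleftrightarrow> (x, y) \<in> r"
proof -
  have "finite (A // r)" using assms by (simp add: finite_quotient equiv_type)
  then obtain h :: "'a set \<Rightarrow> nat" where h: "inj_on h (A // r)"
    using ex_bij_betw_finite_nat bij_betw_imp_inj_on by blast
  have "h (r `` {x}) = h (r `` {y}) \<longleftrightarrow> (x, y) \<in> r" if "x \<in> A" "y \<in> A" for x y
    using inj_on_eq_iff[OF h quotientI[OF that(1)] quotientI[OF that(2)]]
      eq_equiv_class_iff[OF assms(2) that] by simp
  then show thesis by (rule that)
qed

lemma card_image_le_if_factors:
  assumes "finite A" "\<And>x y. x \<in> A \<Longrightarrow> y \<in> A \<Longrightarrow> f x = f y \<Longrightarrow> g x = g y"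
  shows "card (g ` A) \<le> card (f ` A)"
proof -
  have "g x = g (inv_into A f (f x))" if "x \<in> A" for x
    using assms(2)[OF that inv_into_into] f_inv_into_f that by (metis imageI)
  then have "g ` A = (\<lambda>y. g (inv_into A f y)) ` (f ` A)"
    by (simp add: image_image cong: image_cong)
  then show ?thesis using assms(1) by (simp add: card_image_le)
qed

lemma union_embedding_imp_k_local:
  assumes sg: "simple_graph V E" and ue: "union_embedding V E vs p"
  obtains q where "book_embedding V E vs q" "k_local (num_pages E p) V E q"
proof -
  have finE: "finite E" using sg by (rule simple_graph_finite_edges)
  obtain q :: "'a set \<Rightarrow> nat"
    where q: "\<And>e f. e \<in> E \<Longrightarrow> f \<in> E \<Longrightarrow> q e = q f \<longleftrightarrow> same_component E p (p e) e f"
    using equiv_class_index[OF finE same_component_equiv[OF sg, of p]] by (simp only: mem_Collect_eq case_prod_conv) blast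
  have "book_embedding V E vs q"
    using ue q unfolding union_embedding_def book_embedding_def linear_embedding_def by blast
  moreover have "card (pages_at E q v) \<le> num_pages E p" for v
  proof -
    have "card (q ` {e\<in>E. v \<in> e}) \<le> card (p ` {e\<in>E. v \<in> e})"
      using finE by (intro card_image_le_if_factors) (simp_all, metis q same_component_at_vertex)
    also have "\<dots> \<le> card (p ` E)" using finE by (intro card_mono) auto
    finally show ?thesis unfolding pages_at_def num_pages_def .
  qed
  ultimately show thesis using that unfolding k_local_def by blast
qed

lemma union_embedding_exists:
  assumes "simple_graph V E" obtains vs p where "union_embedding V E vs p"
proof -
  have "finite V" using assms unfolding simple_graph_def by simp
  then obtain vs where vs: "distinct vs" "set vs = V" using finite_distinct_list by blast
  obtain p :: "'a set \<Rightarrow> nat" where p: "inj_on p E"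
    using simple_graph_finite_edges[OF assms] ex_bij_betw_finite_nat bij_betw_imp_inj_on by blast
  have "\<not> crosses vs e f" if "same_component E p i e f" for i e f
  proof -
    have "e \<in> E" "f \<in> E" "p e = p f" using same_componentD[OF that] by auto
    then have "e = f" using inj_onD[OF p] by blast
    then show ?thesis using not_crosses_self[OF vs(1)] by simp
  qed
  then have "union_embedding V E vs p"
    using vs unfolding union_embedding_def linear_embedding_def by blast
  then show thesis by (rule that)
qed

lemma local_page_number_le_union_page_number:
  assumes sg: "simple_graph V E"
  shows "local_page_number V E \<le> union_page_number V E"
proof -
  obtain vs0 p0 where "union_embedding V E vs0 p0" using union_embedding_exists[OF sg] .
  then have "\<exists>k vs p. union_embedding V E vs p \<and> num_pages E p = k" by blast
  then have "\<exists>vs p. union_embedding V E vs p \<and> num_pages E p = union_page_number V E"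
    unfolding union_page_number_def by (rule LeastI_ex)
  then obtain vs p where ue: "union_embedding V E vs p"
    and "num_pages E p = union_page_number V E" by blast
  then obtain q where "book_embedding V E vs q" "k_local (union_page_number V E) V E q"
    using union_embedding_imp_k_local[OF sg ue] by metis
  then show ?thesis unfolding local_page_number_def by (blast intro: Least_le)
qed

lemma le_local_page_numberI:
  assumes sg: "simple_graph V E"
    and bound: "\<And>vs p j. book_embedding V E vs p \<Longrightarrow> k_local j V E p \<Longrightarrow> k \<le> j"
  shows "k \<le> local_page_number V E"
proof -
  obtain vs0 p0 where ue: "union_embedding V E vs0 p0" using union_embedding_exists[OF sg] .
  obtain q where "book_embedding V E vs0 q" "k_local (num_pages E p0) V E q"
    using union_embedding_imp_k_local[OF sg ue] .
  then have "\<exists>j vs p. book_embedding V E vs p \<and> k_local j V E p" by blast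
  then have "\<exists>vs p. book_embedding V E vs p \<and> k_local (local_page_number V E) V E p"
    unfolding local_page_number_def by (rule LeastI_ex)
  then show ?thesis using bound by blast
qed

section \<open>Leaves and the Helly property of subtrees\<close>

lemma reach_first_edge:
  assumes "reach V E u w" "u \<noteq> w" obtains c where "c \<in> V" "{u, c} \<in> E"
proof -
  have "(\<lambda>x y. x \<in> V \<and> y \<in> V \<and> {x, y} \<in> E)\<^sup>*\<^sup>* u w"
    using assms(1) unfolding reach_def by blast
  then show thesis using assms(2) that by (cases rule: converse_rtranclpE) auto
qed

lemma has_cycle_mono:
  assumes "has_cycle V E" "V \<subseteq> V'" "E \<subseteq> E'" shows "has_cycle V' E'"
  using assms unfolding has_cycle_def by (meson subset_iff subset_trans)

definition is_path :: "'a set set \<Rightarrow> 'a list \<Rightarrow> bool" where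
  "is_path F cs \<longleftrightarrow> distinct cs \<and> (\<forall>i. Suc i < length cs \<longrightarrow> {cs ! i, cs ! Suc i} \<in> F)"

lemma is_path_Cons:
  assumes "is_path F cs" "cs \<noteq> []" "y \<notin> set cs" "{y, hd cs} \<in> F"
  shows "is_path F (y # cs)"
  unfolding is_path_def
proof (intro conjI allI impI)
  show "distinct (y # cs)" using assms(1,3) unfolding is_path_def by simp
  fix i assume "Suc i < length (y # cs)"
  then show "{(y # cs) ! i, (y # cs) ! Suc i} \<in> F"
    using assms by (cases i) (auto simp: hd_conv_nth is_path_def)
qed

lemma has_cycle_of_path:
  assumes "is_path F cs" "set cs \<subseteq> V" "2 \<le> j" "j < length cs" "{cs ! j, hd cs} \<in> F"
  shows "has_cycle V F"
  unfolding has_cycle_def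
proof (intro exI conjI)
  let ?cs = "take (Suc j) cs"
  show "3 \<le> length ?cs" "distinct ?cs" "set ?cs \<subseteq> V"
    using assms set_take_subset[of "Suc j" cs] unfolding is_path_def by auto
  show "\<forall>i. Suc i < length ?cs \<longrightarrow> {?cs ! i, ?cs ! Suc i} \<in> F"
    using assms(1) unfolding is_path_def by auto
  have "last ?cs = cs ! j" using assms(4) by (simp add: take_Suc_conv_app_nth)
  moreover have "hd ?cs = hd cs" by (cases cs) auto
  ultimately show "{last ?cs, hd ?cs} \<in> F" using assms(5) by simp
qed

lemma longest_path_exists:
  assumes "finite V" "is_path F cs0" "set cs0 \<subseteq> V"
  obtains cs where "is_path F cs" "set cs \<subseteq> V" "length cs0 \<le> length cs"
    "\<And>ds. is_path F ds \<Longrightarrow> set ds \<subseteq> V \<Longrightarrow> length ds \<le> length cs"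
proof -
  let ?P = "\<lambda>cs. is_path F cs \<and> set cs \<subseteq> V"
  have "\<forall>ds. ?P ds \<longrightarrow> length ds < Suc (card V)"
  proof (intro allI impI)
    fix ds assume "?P ds"
    then have "length ds = card (set ds)" by (simp add: is_path_def distinct_card)
    also have "\<dots> \<le> card V" using \<open>?P ds\<close> assms(1) by (simp add: card_mono)
    finally show "length ds < Suc (card V)" by simp
  qed
  then obtain cs where cs: "?P cs" and longest: "\<forall>ds. ?P ds \<longrightarrow> length ds \<le> length cs"
    using Lattices_Big.ex_has_greatest_nat[of ?P cs0 length] assms(2,3) by blast
  show thesis
  proof (rule that)
    show "is_path F cs" "set cs \<subseteq> V" using cs by simp_all
    show "length cs0 \<le> length cs" using longest assms(2,3) by simp
    show "\<And>ds. is_path F ds \<Longrightarrow> set ds \<subseteq> V \<Longrightarrow> length ds \<le> length cs" using longest by simp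
  qed
qed

text \<open>The far end of a longest path is a leaf: a further neighbour would either extend the
  path or close a cycle.\<close>
lemma forest_has_leaf:
  assumes sg: "simple_graph N F" and acyclic: "\<not> has_cycle N F" and edge: "{a, c} \<in> F"
  obtains l m where "{l, m} \<in> F" "\<And>y. {l, y} \<in> F \<Longrightarrow> y = m"
proof -
  have "finite N" using sg unfolding simple_graph_def by simp
  moreover have "is_path F [a, c]" using edge edge_card_2[OF sg edge]
    unfolding is_path_def by (auto simp: less_Suc_eq)
  moreover have "set [a, c] \<subseteq> N" using edge_card_2[OF sg edge] by simp
  ultimately obtain cs where cs: "is_path F cs" "set cs \<subseteq> N" "length [a, c] \<le> length cs"
    and longest: "\<And>ds. is_path F ds \<Longrightarrow> set ds \<subseteq> N \<Longrightarrow> length ds \<le> length cs"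
    by (rule longest_path_exists) blast
  have hd: "hd cs = cs ! 0" using cs(3) by (cases cs) auto
  have "{cs ! 0, cs ! 1} \<in> F" using cs(1,3) unfolding is_path_def by auto
  moreover have "y = cs ! 1" if y: "{cs ! 0, y} \<in> F" for y
  proof -
    have "y \<in> set cs"
    proof (rule ccontr)
      assume y_new: "y \<notin> set cs"
      have "{y, hd cs} \<in> F" using y hd by (simp add: insert_commute)
      then have "is_path F (y # cs)" using is_path_Cons[OF cs(1) _ y_new] cs(3) by fastforce
      moreover have "set (y # cs) \<subseteq> N" using cs(2) edge_card_2[OF sg y] by simp
      ultimately show False using longest by fastforce
    qed
    then obtain j where j: "j < length cs" "cs ! j = y" by (metis in_set_conv_nth)
    have "j \<noteq> 0" using j edge_card_2[OF sg y] by (metis)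
    moreover have "\<not> 2 \<le> j"
    proof
      assume "2 \<le> j"
      moreover have "{cs ! j, hd cs} \<in> F" using y j(2) hd by (simp add: insert_commute)
      ultimately show False using has_cycle_of_path[OF cs(1,2) _ j(1)] acyclic by blast
    qed
    ultimately have "j = 1" by linarith
    then show ?thesis using j by simp
  qed
  ultimately show thesis by (rule that)
qed

lemma reach_remove_leaf:
  assumes "reach C E u w" "u \<noteq> l" "w \<noteq> l" and leaf: "\<And>y. {l, y} \<in> E \<Longrightarrow> y = m"
  shows "reach (C - {l}) {e \<in> E. l \<notin> e} u w"
proof -
  let ?R = "\<lambda>x y. x \<in> C \<and> y \<in> C \<and> {x, y} \<in> E"
  let ?R' = "\<lambda>x y. x \<in> C - {l} \<and> y \<in> C - {l} \<and> {x, y} \<in> {e \<in> E. l \<notin> e}"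
  have "?R\<^sup>*\<^sup>* u w" using assms(1) unfolding reach_def by blast
  then have "?R'\<^sup>*\<^sup>* u (if w = l then m else w)"
  proof (induction rule: rtranclp_induct)
    case base then show ?case using assms(2) by simp
  next
    case (step y z)
    have "{l, z} \<in> E" if "y = l" using step(2) that by simp
    moreover have "{l, y} \<in> E" if "z = l" using step(2) that by (simp add: insert_commute)
    ultimately show ?case
      using step leaf rtranclp.rtrancl_into_rtrancl[OF step.IH, of z] by (auto split: if_splits)
  qed
  then show ?thesis using assms(1-3) unfolding reach_def by auto
qed

lemma connected_graph_remove_leaf:
  assumes "connected_graph C E" "C - {l} \<noteq> {}" "\<And>y. {l, y} \<in> E \<Longrightarrow> y = m"
  shows "connected_graph (C - {l}) {e \<in> E. l \<notin> e}"
  using assms reach_remove_leaf unfolding connected_graph_def by (metis Diff_iff insertCI)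

lemma leaf_neighbour_in_connected:
  assumes "connected_graph C E" "l \<in> C" "C \<noteq> {l}" "\<And>y. {l, y} \<in> E \<Longrightarrow> y = m"
  shows "m \<in> C"
proof -
  obtain t where "t \<in> C" "t \<noteq> l" using assms(2,3) by blast
  then have "reach C E l t" using assms(1,2) unfolding connected_graph_def by blast
  then obtain c where "c \<in> C" "{l, c} \<in> E" using \<open>t \<noteq> l\<close> reach_first_edge by metis
  then show ?thesis using assms(4) by blast
qed

lemma is_tree_remove_leaf:
  assumes tree: "is_tree N F" and "l \<in> N" "m \<in> N" "l \<noteq> m" "\<And>y. {l, y} \<in> F \<Longrightarrow> y = m"
  shows "is_tree (N - {l}) {f \<in> F. l \<notin> f}"
  using assms connected_graph_remove_leaf[of N F l m] has_cycle_mono[of "N - {l}" "{f \<in> F. l \<notin> f}" N F]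
  unfolding is_tree_def simple_graph_def by blast

lemma tree_has_leaf:
  assumes "is_tree N F" "a \<in> N" "b \<in> N" "a \<noteq> b"
  obtains l m where "l \<in> N" "m \<in> N" "l \<noteq> m" "\<And>y. {l, y} \<in> F \<Longrightarrow> y = m"
proof -
  have sg: "simple_graph N F" and "connected_graph N F" and acyclic: "\<not> has_cycle N F"
    using assms(1) unfolding is_tree_def by auto
  then have "reach N F a b" using assms(2,3) unfolding connected_graph_def by blast
  then obtain c where "{a, c} \<in> F" using assms(4) by (rule reach_first_edge)
  then obtain l m where lm: "{l, m} \<in> F" and "\<And>y. {l, y} \<in> F \<Longrightarrow> y = m"
    using forest_has_leaf[OF sg acyclic] by blast
  moreover have "l \<in> N" "m \<in> N" "l \<noteq> m" using edge_card_2[OF sg lm] by auto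
  ultimately show thesis using that by blast
qed

lemma subtree_remove_leaf:
  assumes "connected_graph T {f \<in> F. f \<subseteq> T}" "T \<noteq> {l}" and leaf: "\<And>y. {l, y} \<in> F \<Longrightarrow> y = m"
  shows "connected_graph (T - {l}) {f \<in> {f \<in> F. l \<notin> f}. f \<subseteq> T - {l}}"
    and "l \<in> T \<Longrightarrow> m \<in> T"
proof -
  have "T - {l} \<noteq> {}" using assms(1,2) unfolding connected_graph_def by blast
  then have "connected_graph (T - {l}) {e \<in> {f \<in> F. f \<subseteq> T}. l \<notin> e}"
    by (rule connected_graph_remove_leaf[OF assms(1)]) (use leaf in blast)
  moreover have "{e \<in> {f \<in> F. f \<subseteq> T}. l \<notin> e} = {f \<in> {f \<in> F. l \<notin> f}. f \<subseteq> T - {l}}" by auto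
  ultimately show "connected_graph (T - {l}) {f \<in> {f \<in> F. l \<notin> f}. f \<subseteq> T - {l}}" by simp
  show "m \<in> T" if "l \<in> T"
    using leaf_neighbour_in_connected[OF assms(1) that assms(2)] leaf by blast
qed

text \<open>Induction on the tree: cut off a leaf \<open>l\<close>.  Either some subtree is \<open>{l}\<close>, and then \<open>l\<close>
  lies in all of them, or every subtree through \<open>l\<close> also contains the neighbour of \<open>l\<close>, so the
  subtrees stay pairwise intersecting without \<open>l\<close>.\<close>
lemma subtrees_Helly:
  assumes "is_tree N F"
    and "\<And>v. v \<in> K \<Longrightarrow> T v \<subseteq> N \<and> connected_graph (T v) {f \<in> F. f \<subseteq> T v}"
    and "\<And>u w. u \<in> K \<Longrightarrow> w \<in> K \<Longrightarrow> T u \<inter> T w \<noteq> {}"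
  shows "\<exists>t\<in>N. \<forall>v\<in>K. t \<in> T v"
  using assms
proof (induction "card N" arbitrary: N F T rule: less_induct)
  case less
  have sub: "T v \<subseteq> N" and con: "connected_graph (T v) {f \<in> F. f \<subseteq> T v}"
    and ne: "T v \<noteq> {}" if "v \<in> K" for v
    using less.prems(2)[OF that] less.prems(3)[OF that that] by auto
  show ?case
  proof (cases "\<exists>a\<in>N. \<exists>b\<in>N. a \<noteq> b")
    case False
    obtain t where "t \<in> N" using less.prems(1) unfolding is_tree_def connected_graph_def by auto
    then have "t \<in> T v" if "v \<in> K" for v using False sub[OF that] ne[OF that] by (metis equals0I subsetD)
    then show ?thesis using \<open>t \<in> N\<close> by blast
  next
    case True
    then obtain l m where l: "l \<in> N" "m \<in> N" "l \<noteq> m" and leaf: "\<And>y. {l, y} \<in> F \<Longrightarrow> y = m"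
      using tree_has_leaf[OF less.prems(1)] by metis
    show ?thesis
    proof (cases "\<exists>u\<in>K. T u = {l}")
      case True
      then obtain u where "u \<in> K" "T u = {l}" by blast
      then have "l \<in> T v" if "v \<in> K" for v using less.prems(3)[OF \<open>u \<in> K\<close> that] by auto
      then show ?thesis using l(1) by blast
    next
      case False
      define T' where "T' v = T v - {l}" for v
      have con': "connected_graph (T' v) {f \<in> {f \<in> F. l \<notin> f}. f \<subseteq> T' v}"
        and m_in: "l \<in> T v \<Longrightarrow> m \<in> T v" if "v \<in> K" for v
        using subtree_remove_leaf[OF con[OF that] _ leaf] False that unfolding T'_def by blast+
      have "\<exists>t\<in>N - {l}. \<forall>v\<in>K. t \<in> T' v"
      proof (rule less.hyps)
        show "card (N - {l}) < card N"
          using less.prems(1) l(1) unfolding is_tree_def simple_graph_def by (blast intro: card_Diff1_less)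
        show "is_tree (N - {l}) {f \<in> F. l \<notin> f}"
          using is_tree_remove_leaf[OF less.prems(1) l leaf] .
        show "T' v \<subseteq> N - {l} \<and> connected_graph (T' v) {f \<in> {f \<in> F. l \<notin> f}. f \<subseteq> T' v}"
          if "v \<in> K" for v
          using sub[OF that] con'[OF that] unfolding T'_def by blast
      next
        fix u w assume "u \<in> K" "w \<in> K"
        then obtain t where "t \<in> T u" "t \<in> T w" using less.prems(3) by blast
        then have "t \<in> T' u \<inter> T' w \<or> m \<in> T' u \<inter> T' w"
          using m_in \<open>u \<in> K\<close> \<open>w \<in> K\<close> l(3) unfolding T'_def by blast
        then show "T' u \<inter> T' w \<noteq> {}" by blast
      qed
      then show ?thesis unfolding T'_def by blast
    qed
  qed
qed

lemma clique_in_bag: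
  assumes td: "tree_decomposition V E N F B" and "K \<subseteq> V"
    and clique: "\<And>u w. u \<in> K \<Longrightarrow> w \<in> K \<Longrightarrow> u \<noteq> w \<Longrightarrow> {u, w} \<in> E"
  shows "\<exists>t\<in>N. K \<subseteq> B t"
proof -
  have tree: "is_tree N F" and cover: "\<And>e. e \<in> E \<Longrightarrow> \<exists>t\<in>N. e \<subseteq> B t"
    and con: "\<And>v. v \<in> K \<Longrightarrow> connected_graph {t \<in> N. v \<in> B t} {f \<in> F. f \<subseteq> {t \<in> N. v \<in> B t}}"
    using td \<open>K \<subseteq> V\<close> unfolding tree_decomposition_def by auto
  have "\<exists>t\<in>N. \<forall>v\<in>K. t \<in> {t \<in> N. v \<in> B t}"
  proof (rule subtrees_Helly[OF tree])
    fix v assume "v \<in> K"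
    then show "{t \<in> N. v \<in> B t} \<subseteq> N \<and>
      connected_graph {t \<in> N. v \<in> B t} {f \<in> F. f \<subseteq> {t \<in> N. v \<in> B t}}"
      using con by blast
  next
    fix u w assume "u \<in> K" "w \<in> K"
    show "{t \<in> N. u \<in> B t} \<inter> {t \<in> N. w \<in> B t} \<noteq> {}"
    proof (cases "u = w")
      case True
      then show ?thesis using con[OF \<open>u \<in> K\<close>] unfolding connected_graph_def by simp
    next
      case False
      then obtain t where "t \<in> N" "{u, w} \<subseteq> B t"
        using cover clique[OF \<open>u \<in> K\<close> \<open>w \<in> K\<close>] by blast
      then show ?thesis by blast
    qed
  qed
  then show ?thesis by blast
qed

lemma star_not_has_cycle:
  assumes "\<And>f. f \<in> F \<Longrightarrow> c \<in> f"
  shows "\<not> has_cycle V F"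
proof
  assume "has_cycle V F"
  then obtain cs where cs: "length cs \<ge> 3" "distinct cs"
    "\<And>i. Suc i < length cs \<Longrightarrow> {cs ! i, cs ! Suc i} \<in> F" "{last cs, hd cs} \<in> F"
    unfolding has_cycle_def by metis
  have ne: "cs \<noteq> []" using cs(1) by auto
  have d: "cs ! i \<noteq> cs ! j" if "i < length cs" "j < length cs" "i \<noteq> j" for i j
    using cs(2) that by (simp add: nth_eq_iff_index_eq)
  have "c \<in> {cs ! 0, cs ! 1}" using assms cs(3)[of 0] cs(1) by auto
  moreover have "c \<in> {cs ! 1, cs ! 2}" using assms cs(3)[of 1] cs(1) by (auto simp: numeral_2_eq_2)
  moreover have "c \<in> {cs ! (length cs - 1), cs ! 0}"
    using assms cs(4) ne by (auto simp: last_conv_nth hd_conv_nth)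
  moreover have "cs ! 0 \<noteq> cs ! 2" "cs ! 1 \<noteq> cs ! 0" "cs ! 1 \<noteq> cs ! (length cs - 1)"
    using d[of 0 2] d[of 1 0] d[of 1 "length cs - 1"] cs(1) ne by auto
  ultimately show False by auto
qed

lemma star_is_tree:
  assumes "c \<in> X" "finite X"
  shows "is_tree X ((\<lambda>t. {c, t}) ` (X - {c}))"
proof -
  let ?F = "(\<lambda>t. {c, t}) ` (X - {c})"
  have to_c: "reach X ?F u c" if "u \<in> X" for u
  proof (cases "u = c")
    case True
    then show ?thesis using that by (simp add: reach_refl)
  next
    case False
    then have "{u, c} \<in> ?F" using that by (simp add: insert_commute)
    then show ?thesis using that assms(1) by (simp add: reach_edge)
  qed
  have "connected_graph X ?F"
    unfolding connected_graph_def using assms(1) reach_trans[OF to_c reach_sym[OF to_c]] by blast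
  moreover have "simple_graph X ?F" using assms unfolding simple_graph_def by (auto simp: card_insert_if)
  moreover have "\<not> has_cycle X ?F" by (rule star_not_has_cycle[of _ c]) blast
  ultimately show ?thesis unfolding is_tree_def by blast
qed

section \<open>Fans in local book embeddings\<close>

lemma k_local_inj_pages_card_le:
  assumes "finite E" "k_local j V E p" "a \<in> V"
    and "\<And>z. z \<in> Y \<Longrightarrow> {a, z} \<in> E" "inj_on (\<lambda>z. p {a, z}) Y"
  shows "card Y \<le> j"
proof -
  have "(\<lambda>z. p {a, z}) ` Y \<subseteq> pages_at E p a"
    using assms(4) unfolding pages_at_def by auto
  moreover have "finite (pages_at E p a)" using assms(1) unfolding pages_at_def by simp
  ultimately have "card ((\<lambda>z. p {a, z}) ` Y) \<le> card (pages_at E p a)" by (rule card_mono[rotated])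
  also have "\<dots> \<le> j" using assms(2,3) unfolding k_local_def by blast
  finally show ?thesis using card_image[OF assms(5)] by simp
qed

lemma k_local_same_page_pair:
  assumes "finite E" "k_local j V E p" "x \<in> V" "S \<subseteq> set vs"
    and "\<And>s. s \<in> S \<Longrightarrow> {x, s} \<in> E" "j < card S"
  obtains a b where "a \<in> S" "b \<in> S" "prec vs a b" "p {a, x} = p {b, x}"
proof -
  have "\<not> inj_on (\<lambda>s. p {x, s}) S"
    using k_local_inj_pages_card_le[OF assms(1-3,5)] assms(6) by fastforce
  then obtain s1 s2 where s: "s1 \<in> S" "s2 \<in> S" "s1 \<noteq> s2" "p {s1, x} = p {s2, x}"
    unfolding inj_on_def by (auto simp: insert_commute)
  have "prec vs s1 s2 \<or> prec vs s2 s1" using prec_total[OF _ _ s(3)] s(1,2) assms(4) by blast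
  then show thesis using that s by metis
qed

definition side :: "'a list \<Rightarrow> 'a \<Rightarrow> 'a \<Rightarrow> 'a \<Rightarrow> nat" where
  "side vs a b x = (if prec vs x a then 0 else if prec vs x b then 1 else 2)"

lemma side_less_3: "side vs a b x < 3"
  unfolding side_def by simp

lemma same_side_crosses:
  assumes vs: "distinct vs" and ab: "prec vs a b" and z: "prec vs z1 z2"
    and "z1 \<notin> {a, b}" and same: "side vs a b z1 = side vs a b z2"
  shows "crosses vs {a, z1} {b, z2} \<or> crosses vs {a, z2} {b, z1}"
proof -
  have in_vs: "a \<in> set vs" "b \<in> set vs" "z1 \<in> set vs"
    using ab z unfolding prec_def by auto
  show ?thesis
  proof (cases "prec vs z1 a")
    case True
    then have "prec vs z2 a" using same unfolding side_def by (auto split: if_splits)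
    then show ?thesis using crossesI[OF vs z _ ab] by (simp add: insert_commute)
  next
    case False
    then have "prec vs a z1" using prec_total[OF in_vs(1,3)] assms(4) by auto
    show ?thesis
    proof (cases "prec vs z1 b")
      case True
      then have "prec vs z2 b" using same \<open>\<not> prec vs z1 a\<close> unfolding side_def by (auto split: if_splits)
      then show ?thesis using crossesI[OF vs \<open>prec vs a z1\<close> z] by (simp add: insert_commute)
    next
      case False
      then have "prec vs b z1" using prec_total[OF in_vs(2,3)] assms(4) by auto
      then show ?thesis using crossesI[OF vs ab _ z] by simp
    qed
  qed
qed

lemma same_side_pages_inj:
  assumes be: "book_embedding V E vs p" and ab: "prec vs a b"
    and Y: "Y \<subseteq> set vs - {a, b}" "\<And>z. z \<in> Y \<Longrightarrow> side vs a b z = r"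
    and edges: "\<And>z. z \<in> Y \<Longrightarrow> {a, z} \<in> E \<and> {b, z} \<in> E"
    and pages: "\<And>z. z \<in> Y \<Longrightarrow> p {a, z} = p {b, z}"
  shows "inj_on (\<lambda>z. p {a, z}) Y"
proof -
  have vs: "distinct vs" using be unfolding book_embedding_def linear_embedding_def by simp
  have no_cross: "\<not> crosses vs e f" if "e \<in> E" "f \<in> E" "p e = p f" for e f
    using be that unfolding book_embedding_def by blast
  have distinct_pages: "p {a, z1} \<noteq> p {a, z2}" if z: "z1 \<in> Y" "z2 \<in> Y" "prec vs z1 z2" for z1 z2
  proof
    assume same_page: "p {a, z1} = p {a, z2}"
    have "z1 \<notin> {a, b}" using Y(1) z(1) by blast
    moreover have "side vs a b z1 = side vs a b z2" using Y(2) z(1,2) by simp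
    ultimately have "crosses vs {a, z1} {b, z2} \<or> crosses vs {a, z2} {b, z1}"
      by (rule same_side_crosses[OF vs ab z(3)])
    moreover have "p {a, z1} = p {b, z2}" "p {a, z2} = p {b, z1}"
      using same_page pages[OF z(1)] pages[OF z(2)] by simp_all
    ultimately show False using no_cross edges[OF z(1)] edges[OF z(2)] by blast
  qed
  show ?thesis
  proof (rule inj_onI, rule ccontr)
    fix z1 z2 assume z: "z1 \<in> Y" "z2 \<in> Y" "p {a, z1} = p {a, z2}" "z1 \<noteq> z2"
    have "z1 \<in> set vs" "z2 \<in> set vs" using Y(1) z(1,2) by auto
    then have "prec vs z1 z2 \<or> prec vs z2 z1" using prec_total[OF _ _ z(4)] by blast
    then show False using distinct_pages z(1-3) by metis
  qed
qed

section \<open>The complete split graph\<close>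

definition complete_split_vertices :: "nat \<Rightarrow> nat \<Rightarrow> nat set" where
  "complete_split_vertices k n = {0..<k + n}"

definition complete_split_edges :: "nat \<Rightarrow> nat \<Rightarrow> nat set set" where
  "complete_split_edges k n = {{a, b} | a b. a < k \<and> a < b \<and> b < k + n}"

lemma complete_split_simple: "simple_graph (complete_split_vertices k n) (complete_split_edges k n)"
  unfolding simple_graph_def complete_split_vertices_def complete_split_edges_def by auto

lemma complete_split_edgeI:
  assumes "a < k" "b < k + n" "a \<noteq> b"
  shows "{a, b} \<in> complete_split_edges k n"
proof (cases "a < b")
  case True
  then show ?thesis using assms unfolding complete_split_edges_def by blast
next
  case False
  then have "b < a" using assms(3) by simp
  moreover have "b < k" "a < k + n" using \<open>b < a\<close> assms(1) by simp_all
  ultimately have "{b, a} \<in> complete_split_edges k n"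
    unfolding complete_split_edges_def by blast
  then show ?thesis by (simp add: insert_commute)
qed

lemma complete_split_tree_decomposition:
  assumes "n \<ge> 1"
  shows "tree_decomposition (complete_split_vertices k n) (complete_split_edges k n)
    {k..<k + n} ((\<lambda>t. {k, t}) ` ({k..<k + n} - {k})) (\<lambda>t. {0..<k} \<union> {t})"
proof -
  let ?X = "{k..<k + n}" and ?F = "(\<lambda>t. {k, t}) ` ({k..<k + n} - {k})"
    and ?B = "\<lambda>t. {0..<k} \<union> {t}"
  have k: "k \<in> ?X" using assms by simp
  have tree: "is_tree ?X ?F" using star_is_tree[OF k] by simp
  have "x \<in> (\<Union>t\<in>?X. ?B t)" if "x < k + n" for x
    using k that by (cases "x < k") auto
  then have "(\<Union>t\<in>?X. ?B t) = complete_split_vertices k n"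
    unfolding complete_split_vertices_def by auto
  moreover have "\<exists>t\<in>?X. e \<subseteq> ?B t" if e: "e \<in> complete_split_edges k n" for e
  proof -
    obtain a b where "e = {a, b}" "a < k" "a < b" "b < k + n"
      using e unfolding complete_split_edges_def by blast
    then show ?thesis using k by (cases "b < k") auto
  qed
  moreover have "connected_graph {t \<in> ?X. v \<in> ?B t} {f \<in> ?F. f \<subseteq> {t \<in> ?X. v \<in> ?B t}}"
    if "v \<in> complete_split_vertices k n" for v
  proof (cases "v < k")
    case True
    then have "{t \<in> ?X. v \<in> ?B t} = ?X" by auto
    moreover have "{f \<in> ?F. f \<subseteq> ?X} = ?F" using k by auto
    ultimately show ?thesis using tree unfolding is_tree_def by simp
  next
    case False
    then have "{t \<in> ?X. v \<in> ?B t} = {v}"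
      using that unfolding complete_split_vertices_def by auto
    then show ?thesis unfolding connected_graph_def by (simp add: reach_refl)
  qed
  ultimately show ?thesis using tree unfolding tree_decomposition_def by blast
qed

lemma complete_split_clique:
  assumes "n \<ge> 1" "u \<in> {0..k}" "w \<in> {0..k}" "u \<noteq> w"
  shows "{u, w} \<in> complete_split_edges k n"
proof (cases "u < k")
  case True
  then show ?thesis using assms by (intro complete_split_edgeI) auto
next
  case False
  then have "{w, u} \<in> complete_split_edges k n" using assms by (intro complete_split_edgeI) auto
  then show ?thesis by (simp add: insert_commute)
qed

lemma treewidth_complete_split:
  assumes "n \<ge> 1"
  shows "treewidth (complete_split_vertices k n) (complete_split_edges k n) = k"
  unfolding treewidth_def
proof (rule Least_equality)
  have "\<forall>t\<in>{k..<k + n}. card ({0..<k} \<union> {t}) \<le> k + 1" by (simp add: card_insert_if)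
  then show "\<exists>N F B. tree_decomposition (complete_split_vertices k n) (complete_split_edges k n) N F B \<and>
    (\<forall>t\<in>N. card (B t) \<le> k + 1)"
    using complete_split_tree_decomposition[OF assms] by blast
next
  fix w assume "\<exists>N F B. tree_decomposition (complete_split_vertices k n) (complete_split_edges k n) N F B \<and>
    (\<forall>t\<in>N. card (B t) \<le> w + 1)"
  then obtain N F B where td: "tree_decomposition (complete_split_vertices k n) (complete_split_edges k n) N F B"
    and width: "\<forall>t\<in>N. card (B t) \<le> w + 1" by blast
  have "{0..k} \<subseteq> complete_split_vertices k n"
    using assms unfolding complete_split_vertices_def by auto
  then obtain t where t: "t \<in> N" "{0..k} \<subseteq> B t"
    using clique_in_bag[OF td _ complete_split_clique[OF assms]] by blast
  have "B t \<subseteq> complete_split_vertices k n"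
    using td t(1) unfolding tree_decomposition_def by blast
  then have "finite (B t)" unfolding complete_split_vertices_def by (simp add: finite_subset)
  then have "card {0..k} \<le> card (B t)" using t(2) by (rule card_mono)
  then show "k \<le> w" using width t(1) by fastforce
qed

lemma complete_split_local_bound:
  assumes be: "book_embedding (complete_split_vertices k n) (complete_split_edges k n) vs p"
    and loc: "k_local j (complete_split_vertices k n) (complete_split_edges k n) p" and "j < k"
  shows "n \<le> 3 * k * k * j"
proof -
  let ?V = "complete_split_vertices k n" and ?E = "complete_split_edges k n" and ?X = "{k..<k + n}"
  have finE: "finite ?E" using complete_split_simple by (rule simple_graph_finite_edges)
  have vs: "set vs = ?V" using be unfolding book_embedding_def linear_embedding_def by simp
  have V: "?V = {0..<k} \<union> ?X" unfolding complete_split_vertices_def by auto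
  have edge: "{a, z} \<in> ?E" "{z, a} \<in> ?E" if "a < k" "z \<in> ?X" for a z
    using that complete_split_edgeI[of a k z n] by (auto simp: insert_commute)
  have "\<exists>a b. a < k \<and> b < k \<and> prec vs a b \<and> p {a, x} = p {b, x}" if x: "x \<in> ?X" for x
  proof -
    have "x \<in> ?V" "{0..<k} \<subseteq> set vs" using x vs V by auto
    moreover have "{x, s} \<in> ?E" if "s \<in> {0..<k}" for s using edge(2) that x by simp
    moreover have "j < card {0..<k}" using \<open>j < k\<close> by simp
    ultimately obtain a b where "a \<in> {0..<k}" "b \<in> {0..<k}" "prec vs a b" "p {a, x} = p {b, x}"
      by (rule k_local_same_page_pair[OF finE loc]) blast
    then show ?thesis by auto
  qed
  then obtain a b where ab: "\<And>x. x \<in> ?X \<Longrightarrow>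
      a x < k \<and> b x < k \<and> prec vs (a x) (b x) \<and> p {a x, x} = p {b x, x}"
    by metis
  define cls where "cls x = (a x, b x, side vs (a x) (b x) x)" for x
  define C where "C = {0..<k} \<times> {0..<k} \<times> {0..<3::nat}"
  have "cls \<in> ?X \<rightarrow> C" using ab side_less_3 unfolding cls_def C_def by auto
  moreover have "C \<noteq> {}" using \<open>j < k\<close> unfolding C_def by auto
  ultimately obtain c where big: "card (cls -` {c} \<inter> ?X) * card C \<ge> card ?X"
    using pigeonhole_card[of cls ?X C] unfolding C_def by auto
  obtain a0 b0 r where c: "c = (a0, b0, r)" by (cases c)
  define Y where "Y = cls -` {c} \<inter> ?X"
  have Y: "z \<in> ?X" "a z = a0" "b z = b0" "side vs a0 b0 z = r" if "z \<in> Y" for z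
    using that unfolding Y_def cls_def c by auto
  have "card Y \<le> j"
  proof (cases "Y = {}")
    case False
    then obtain z where "z \<in> Y" by blast
    then have a0: "a0 < k" "b0 < k" "prec vs a0 b0" using ab[of z] Y[of z] by auto
    have "inj_on (\<lambda>z. p {a0, z}) Y"
    proof (rule same_side_pages_inj[OF be a0(3)])
      show "Y \<subseteq> set vs - {a0, b0}" using Y(1) a0(1,2) vs V by fastforce
      show "side vs a0 b0 z = r" if "z \<in> Y" for z using Y(4) that .
      show "{a0, z} \<in> ?E \<and> {b0, z} \<in> ?E" if "z \<in> Y" for z using edge(1) a0(1,2) Y(1) that by simp
      show "p {a0, z} = p {b0, z}" if "z \<in> Y" for z using ab[of z] Y[OF that] by simp
    qed
    moreover have "a0 \<in> ?V" using a0(1) V by simp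
    ultimately show ?thesis using k_local_inj_pages_card_le[OF finE loc] edge(1)[OF a0(1)] Y(1) by blast
  qed simp
  then have "card Y * card C \<le> j * card C" by simp
  moreover have "card ?X = n" by simp
  ultimately have "n \<le> j * card C" using big unfolding Y_def by linarith
  then show ?thesis unfolding C_def by (simp add: card_cartesian_product algebra_simps)
qed

lemma local_page_number_complete_split:
  assumes "k \<ge> 1"
  shows "k \<le> local_page_number (complete_split_vertices k (3 * k * k * k))
    (complete_split_edges k (3 * k * k * k))"
proof (rule le_local_page_numberI[OF complete_split_simple])
  fix vs p j
  assume be: "book_embedding (complete_split_vertices k (3 * k * k * k))
      (complete_split_edges k (3 * k * k * k)) vs p"
    and loc: "k_local j (complete_split_vertices k (3 * k * k * k))
      (complete_split_edges k (3 * k * k * k)) p"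
  show "k \<le> j"
  proof (rule ccontr)
    assume "\<not> k \<le> j"
    then have "3 * k * k * k \<le> 3 * k * k * j" using complete_split_local_bound[OF be loc] by simp
    moreover have "3 * k * k * j < 3 * k * k * k" using \<open>\<not> k \<le> j\<close> assms by simp
    ultimately show False by simp
  qed
qed

theorem theorem3:
  fixes k :: nat
  assumes "k \<ge> 1"
  shows "\<exists>(V :: nat set) (E :: nat set set).
           simple_graph V E \<and> treewidth V E = k \<and>
           union_page_number V E \<ge> local_page_number V E \<and>
           local_page_number V E \<ge> k"
proof (intro exI conjI)
  let ?V = "complete_split_vertices k (3 * k * k * k)"
    and ?E = "complete_split_edges k (3 * k * k * k)"
  show "simple_graph ?V ?E" by (rule complete_split_simple)
  show "treewidth ?V ?E = k" using assms by (intro treewidth_complete_split) simp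
  show "local_page_number ?V ?E \<le> union_page_number ?V ?E"
    by (rule local_page_number_le_union_page_number[OF complete_split_simple])
  show "k \<le> local_page_number ?V ?E" by (rule local_page_number_complete_split[OF assms])
qed

end
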